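(* Let $\omega\in S_n$ avoid the pattern $231$. Then for any $i\neq j$ with $c_i(\omega),c_j(\omega)>0$, every element of $C_i(\omega)$ is incomparable with every element of $C_j(\omega)$; consequently $M_\omega$ is a disjoint union of the chains $C_i(\omega)$.
   Context: Permutations $\omega\in S_n$ are written in one-line notation. Let ${\rm Inv}(\omega)=\{(i,j): 1\le i<j\le n,\ \omega(i)>\omega(j)\}$, $c_i(\omega)=\#\{j: i<j\le n,\ \omega(i)>\omega(j)\}$, and for $i<j$, $c_{i,j}(\omega)=\#\{k: i<k<j,\ \omega(i)>\omega(k)\}$; $[m]=\{1,\dots,m\}$. For $i$ with $c_i(\omega)>0$ and $x\in[c_i(\omega)]$, $m_{i,x}(\omega)\in\mathbb{N}^n$ has $j$-th coordinate $0$ if $j<i$; $x$ if $j=i$; $0$ if $j>i$ and $(i,j)\in{\rm Inv}(\omega)$; $\max\{0,x-c_{i,j}(\omega)\}$ if $j>i$ and $(i,j)\notin{\rm Inv}(\omega)$. $M_\omega$ is the set of all $m_{i,x}(\omega)$ with the product order on $\mathbb{N}^n$, and $C_i(\omega)=\{m_{i,x}(\omega): x\in[c_i(\omega)]\}$ (a chain). $\omega$ avoids $231$ if there are no $i<j<l$ with $\omega(l)<\omega(i)<\omega(j)$. *)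

theory Defs
  imports "HOL-Combinatorics.Permutations"
begin

text \<open>A permutation w of S_n is a bijection of {1..n} (one-line notation w(1)...w(n)).
Vectors in N^n are functions nat => nat; only coordinates 1..n are relevant
(the vectors below are 0 outside {1..n}).\<close>

definition c_i :: "(nat \<Rightarrow> nat) \<Rightarrow> nat \<Rightarrow> nat \<Rightarrow> nat" where
  "c_i w n i = card {j. i < j \<and> j \<le> n \<and> w i > w j}"

definition c_ij :: "(nat \<Rightarrow> nat) \<Rightarrow> nat \<Rightarrow> nat \<Rightarrow> nat" where
  "c_ij w i j = card {k. i < k \<and> k < j \<and> w i > w k}"

definition m_vec :: "(nat \<Rightarrow> nat) \<Rightarrow> nat \<Rightarrow> nat \<Rightarrow> nat \<Rightarrow> (nat \<Rightarrow> nat)" where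
  "m_vec w n i x = (\<lambda>j. if j < i then 0
                         else if j = i then x
                         else if j \<le> n then
                           (if w i > w j then 0 else nat (max 0 (int x - int (c_ij w i j))))
                         else 0)"

definition C_chain :: "(nat \<Rightarrow> nat) \<Rightarrow> nat \<Rightarrow> nat \<Rightarrow> (nat \<Rightarrow> nat) set" where
  "C_chain w n i = {m_vec w n i x | x. x \<in> {1..c_i w n i}}"

definition M_set :: "(nat \<Rightarrow> nat) \<Rightarrow> nat \<Rightarrow> (nat \<Rightarrow> nat) set" where
  "M_set w n = {m_vec w n i x | i x. i \<in> {1..n} \<and> 0 < c_i w n i \<and> x \<in> {1..c_i w n i}}"

definition vec_le :: "nat \<Rightarrow> (nat \<Rightarrow> nat) \<Rightarrow> (nat \<Rightarrow> nat) \<Rightarrow> bool" where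
  "vec_le n a b = (\<forall>j\<in>{1..n}. a j \<le> b j)"

definition avoids_231 :: "(nat \<Rightarrow> nat) \<Rightarrow> nat \<Rightarrow> bool" where
  "avoids_231 w n = (\<not> (\<exists>i j l. 1 \<le> i \<and> i < j \<and> j < l \<and> l \<le> n \<and> w l < w i \<and> w i < w j))"

end

theory Submission
  imports Defs
begin

(* If w avoids 231 and i < j with w(i) < w(j), then every inversion (i,k)
   has k < j (otherwise i < j < k would form a 231 pattern), so c_i <= c_{i,j} and
   hence coordinate j of m_{i,x} is max(0, x - c_{i,j}) = 0 for x <= c_i; if
   w(i) > w(j) that coordinate is 0 by definition.  Thus for i < j the vectors
   m_{i,x} and m_{j,y} have "crossing supports": m_{i,x} is positive at i where
   m_{j,y} is 0, and m_{j,y} is positive at j where m_{i,x} is 0, so they are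
   incomparable in the product order.  The decomposition of M_w into the chains
   C_i is immediate from the definitions, and disjointness of distinct chains
   follows from incomparability because the product order is reflexive. *)

lemma crossing_supports_incomparable:
  assumes "i \<in> {1..n}" "j \<in> {1..n}"
    and "0 < a i" "b i = 0" "0 < b j" "a j = 0"
  shows "\<not> vec_le n a b \<and> \<not> vec_le n b a"
  using assms unfolding vec_le_def by force

text \<open>The product order is reflexive; this turns incomparability into disjointness.\<close>
lemma vec_le_refl: "vec_le n a a"
  by (simp add: vec_le_def)

lemma m_vec_at_index: "m_vec w n i x i = x"
  and m_vec_before_index: "k < i \<Longrightarrow> m_vec w n i x k = 0"
  by (simp_all add: m_vec_def)

text \<open>For a 231-avoiding w and an ascent w(i) < w(j) with i < j, all
  inversions starting at i end before j, so c_i does not exceed c_{i,j}.\<close>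
lemma c_i_le_c_ij_at_ascent:
  assumes av: "avoids_231 w n"
    and ij: "1 \<le> i" "i < j" "j \<le> n" and asc: "w i < w j"
  shows "c_i w n i \<le> c_ij w i j"
proof -
  have "{k. i < k \<and> k \<le> n \<and> w i > w k} \<subseteq> {k. i < k \<and> k < j \<and> w i > w k}"
  proof
    fix k assume k: "k \<in> {k. i < k \<and> k \<le> n \<and> w i > w k}"
    have "\<not> j < k" using av ij k asc unfolding avoids_231_def by blast
    moreover have "k \<noteq> j" using k asc by auto
    ultimately show "k \<in> {k. i < k \<and> k < j \<and> w i > w k}" using k by auto
  qed
  then show ?thesis
    unfolding c_i_def c_ij_def by (rule card_mono[rotated]) auto
qed

lemma m_vec_vanishes_after_index:
  assumes inj: "inj_on w {1..n}" and av: "avoids_231 w n"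
    and ij: "1 \<le> i" "i < j" "j \<le> n" and x: "x \<le> c_i w n i"
  shows "m_vec w n i x j = 0"
proof (cases "w i > w j")
  case True
  then show ?thesis using ij by (simp add: m_vec_def)
next
  case False
  have "w i \<noteq> w j" using inj ij by (auto dest: inj_onD)
  with False have asc: "w i < w j" by simp
  have "x \<le> c_ij w i j" using c_i_le_c_ij_at_ascent[OF av ij asc] x by simp
  then show ?thesis using ij asc by (simp add: m_vec_def)
qed

lemma chains_incomparable:
  assumes inj: "inj_on w {1..n}" and av: "avoids_231 w n"
    and i: "i \<in> {1..n}" and j: "j \<in> {1..n}" and ne: "i \<noteq> j"
    and a: "a \<in> C_chain w n i" and b: "b \<in> C_chain w n j"
  shows "\<not> vec_le n a b \<and> \<not> vec_le n b a"
proof -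
  have incomp: "\<not> vec_le n (m_vec w n p x) (m_vec w n q y)
                \<and> \<not> vec_le n (m_vec w n q y) (m_vec w n p x)"
    if "p \<in> {1..n}" "q \<in> {1..n}" "p < q" "x \<in> {1..c_i w n p}" "1 \<le> y" for p q x y
    using that m_vec_vanishes_after_index[OF inj av, of p q x]
    by (intro crossing_supports_incomparable) (auto simp: m_vec_at_index m_vec_before_index)
  obtain x where ax: "a = m_vec w n i x" "x \<in> {1..c_i w n i}" using a by (auto simp: C_chain_def)
  obtain y where yb: "b = m_vec w n j y" "y \<in> {1..c_i w n j}" using b by (auto simp: C_chain_def)
  show ?thesis
  proof (cases "i < j")
    case True
    then show ?thesis using incomp[of i j x y] i j ax yb by auto
  next
    case False
    then have "j < i" using ne by simp
    then show ?thesis using incomp[of j i y x] i j ax yb by auto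
  qed
qed

lemma M_set_eq_Union_chains:
  "M_set w n = (\<Union>i\<in>{i\<in>{1..n}. 0 < c_i w n i}. C_chain w n i)"
  unfolding M_set_def C_chain_def by blast

theorem mainTheorem2:
  fixes w :: "nat \<Rightarrow> nat" and n :: nat
  assumes "w permutes {1..n}"
    and "avoids_231 w n"
  shows "(\<forall>i\<in>{1..n}. \<forall>j\<in>{1..n}. i \<noteq> j \<and> 0 < c_i w n i \<and> 0 < c_i w n j \<longrightarrow>
            (\<forall>a\<in>C_chain w n i. \<forall>b\<in>C_chain w n j. \<not> vec_le n a b \<and> \<not> vec_le n b a))
         \<and> M_set w n = (\<Union>i\<in>{i\<in>{1..n}. 0 < c_i w n i}. C_chain w n i)
         \<and> disjoint_family_on (C_chain w n) {i\<in>{1..n}. 0 < c_i w n i}"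
proof (intro conjI)
  have inj: "inj_on w {1..n}"
    using assms(1) by (rule permutes_inj_on)
  note incomp = chains_incomparable[OF inj assms(2)]
  show "\<forall>i\<in>{1..n}. \<forall>j\<in>{1..n}. i \<noteq> j \<and> 0 < c_i w n i \<and> 0 < c_i w n j \<longrightarrow>
          (\<forall>a\<in>C_chain w n i. \<forall>b\<in>C_chain w n j. \<not> vec_le n a b \<and> \<not> vec_le n b a)"
    using incomp by simp
  show "M_set w n = (\<Union>i\<in>{i\<in>{1..n}. 0 < c_i w n i}. C_chain w n i)"
    by (rule M_set_eq_Union_chains)
  show "disjoint_family_on (C_chain w n) {i\<in>{1..n}. 0 < c_i w n i}"
    unfolding disjoint_family_on_def
  proof (intro ballI impI)
    fix i j assume "i \<in> {i\<in>{1..n}. 0 < c_i w n i}" "j \<in> {i\<in>{1..n}. 0 < c_i w n i}" "i \<noteq> j"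
    then show "C_chain w n i \<inter> C_chain w n j = {}"
      using incomp[of i j] vec_le_refl by blast
  qed
qed

end
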